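(* Let $G$ be a connected graph with $|V(G)|=(\Delta(G)+1)(\gamma(G)-1)+1\geq 4$. If $G$ is a vertex domination-critical graph, then $G$ is regular, and $G$ is both a hypo-efficient domination graph and a hypo-unique domination graph.
   Context: All graphs are finite, simple and undirected. For $v\in V(G)$, $N[v]$ is the closed neighborhood of $v$. A set $D\subseteq V(G)$ is dominating if every vertex of $G$ not in $D$ has a neighbor in $D$; $\gamma(G)$ is the minimum size of a dominating set, and a dominating set of size $\gamma(G)$ is a $\gamma$-set. A vertex $v$ is $\gamma$-critical if $\gamma(G-v)<\gamma(G)$; $G$ is a vertex domination-critical graph if every vertex is $\gamma$-critical. A set $D\subseteq V(H)$ is an efficient dominating set (EDS) of $H$ if $|N_H[v]\cap D|=1$ for every $v\in V(H)$. $G$ is a hypo-efficient domination graph if $G$ has no EDS but $G-v$ has at least one EDS for every $v\in V(G)$. $G$ is a hypo-unique domination graph if $G$ has at least two $\gamma$-sets but $G-v$ has exactly one $\gamma$-set for every $v\in V(G)$. $\Delta(G)$ is the maximum degree. *)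

theory Defs
  imports Main
begin

text \<open>A finite simple graph is given by a finite vertex set V and a symmetric,
irreflexive adjacency relation E; only edges between vertices of V matter.
The vertex-deleted subgraph G - v is (V - {v}, E).\<close>

definition simple_graph :: "'a set \<Rightarrow> ('a \<Rightarrow> 'a \<Rightarrow> bool) \<Rightarrow> bool" where
  "simple_graph V E \<longleftrightarrow> finite V \<and> (\<forall>u v. E u v \<longrightarrow> E v u) \<and> (\<forall>v. \<not> E v v)"

definition nbhd :: "'a set \<Rightarrow> ('a \<Rightarrow> 'a \<Rightarrow> bool) \<Rightarrow> 'a \<Rightarrow> 'a set" where
  "nbhd V E v = {u \<in> V. E v u}"

definition closed_nbhd :: "'a set \<Rightarrow> ('a \<Rightarrow> 'a \<Rightarrow> bool) \<Rightarrow> 'a \<Rightarrow> 'a set" where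
  "closed_nbhd V E v = insert v (nbhd V E v)"

definition degree :: "'a set \<Rightarrow> ('a \<Rightarrow> 'a \<Rightarrow> bool) \<Rightarrow> 'a \<Rightarrow> nat" where
  "degree V E v = card (nbhd V E v)"

definition max_degree :: "'a set \<Rightarrow> ('a \<Rightarrow> 'a \<Rightarrow> bool) \<Rightarrow> nat" where
  "max_degree V E = Max (degree V E ` V)"

definition regular :: "'a set \<Rightarrow> ('a \<Rightarrow> 'a \<Rightarrow> bool) \<Rightarrow> bool" where
  "regular V E \<longleftrightarrow> (\<forall>u\<in>V. \<forall>v\<in>V. degree V E u = degree V E v)"

definition connected_graph :: "'a set \<Rightarrow> ('a \<Rightarrow> 'a \<Rightarrow> bool) \<Rightarrow> bool" where
  "connected_graph V E \<longleftrightarrow>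
     (\<forall>u\<in>V. \<forall>v\<in>V. (u, v) \<in> {(x, y). x \<in> V \<and> y \<in> V \<and> E x y}\<^sup>*)"

definition dominating :: "'a set \<Rightarrow> ('a \<Rightarrow> 'a \<Rightarrow> bool) \<Rightarrow> 'a set \<Rightarrow> bool" where
  "dominating V E D \<longleftrightarrow> D \<subseteq> V \<and> (\<forall>v\<in>V - D. \<exists>u\<in>D. E v u)"

definition domination_number :: "'a set \<Rightarrow> ('a \<Rightarrow> 'a \<Rightarrow> bool) \<Rightarrow> nat" where
  "domination_number V E = (LEAST k. \<exists>D. dominating V E D \<and> card D = k)"

definition gamma_set :: "'a set \<Rightarrow> ('a \<Rightarrow> 'a \<Rightarrow> bool) \<Rightarrow> 'a set \<Rightarrow> bool" where
  "gamma_set V E D \<longleftrightarrow> dominating V E D \<and> card D = domination_number V E"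

definition gamma_critical_vertex :: "'a set \<Rightarrow> ('a \<Rightarrow> 'a \<Rightarrow> bool) \<Rightarrow> 'a \<Rightarrow> bool" where
  "gamma_critical_vertex V E v \<longleftrightarrow> domination_number (V - {v}) E < domination_number V E"

definition vertex_domination_critical :: "'a set \<Rightarrow> ('a \<Rightarrow> 'a \<Rightarrow> bool) \<Rightarrow> bool" where
  "vertex_domination_critical V E \<longleftrightarrow> (\<forall>v\<in>V. gamma_critical_vertex V E v)"

definition efficient_dominating :: "'a set \<Rightarrow> ('a \<Rightarrow> 'a \<Rightarrow> bool) \<Rightarrow> 'a set \<Rightarrow> bool" where
  "efficient_dominating V E D \<longleftrightarrow> D \<subseteq> V \<and> (\<forall>v\<in>V. card (closed_nbhd V E v \<inter> D) = 1)"

definition has_EDS :: "'a set \<Rightarrow> ('a \<Rightarrow> 'a \<Rightarrow> bool) \<Rightarrow> bool" where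
  "has_EDS V E \<longleftrightarrow> (\<exists>D. efficient_dominating V E D)"

definition hypo_efficient_domination :: "'a set \<Rightarrow> ('a \<Rightarrow> 'a \<Rightarrow> bool) \<Rightarrow> bool" where
  "hypo_efficient_domination V E \<longleftrightarrow>
     \<not> has_EDS V E \<and> (\<forall>v\<in>V. has_EDS (V - {v}) E)"

definition hypo_unique_domination :: "'a set \<Rightarrow> ('a \<Rightarrow> 'a \<Rightarrow> bool) \<Rightarrow> bool" where
  "hypo_unique_domination V E \<longleftrightarrow>
     (\<exists>D1 D2. gamma_set V E D1 \<and> gamma_set V E D2 \<and> D1 \<noteq> D2) \<and>
     (\<forall>v\<in>V. \<exists>!D. gamma_set (V - {v}) E D)"

end

theory Submission
  imports Defs
begin

text \<open>Adding \<open>v\<close> to a \<open>\<gamma>\<close>-set \<open>D\<^sub>v\<close> of \<open>G - v\<close> dominates \<open>G\<close>, so criticality forces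
  \<open>|D\<^sub>v| = \<gamma> - 1\<close> and no vertex of \<open>D\<^sub>v\<close> is adjacent to \<open>v\<close>. Since
  \<open>n - 1 = (\<Delta> + 1)(\<gamma> - 1)\<close>, the closed neighbourhoods of \<open>D\<^sub>v\<close> then partition \<open>V - {v}\<close>
  and all have size \<open>\<Delta> + 1\<close>: \<open>D\<^sub>v\<close> is an efficient dominating set of \<open>G - v\<close> consisting of
  vertices of maximum degree. Double counting adjacencies between \<open>D\<^sub>v\<close> and \<open>D\<^sub>w\<close> shows
  \<open>w \<in> D\<^sub>v \<longleftrightarrow> v \<in> D\<^sub>w\<close>. This symmetry determines every \<open>D\<^sub>v\<close> uniquely and puts every vertex
  into some \<open>D\<^sub>v\<close>, whence regularity; \<open>G\<close> itself has no efficient dominating set because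
  \<open>n \<equiv> 1 (mod \<Delta> + 1)\<close>, and \<open>{v} \<union> D\<^sub>v\<close>, \<open>{w} \<union> D\<^sub>w\<close> are distinct \<open>\<gamma>\<close>-sets for adjacent \<open>v, w\<close>.\<close>

lemma mem_closed_nbhd_iff: "x \<in> closed_nbhd V E u \<longleftrightarrow> x = u \<or> (x \<in> V \<and> E u x)"
  by (auto simp: closed_nbhd_def nbhd_def)

lemma closed_nbhd_subset: "u \<in> V \<Longrightarrow> closed_nbhd V E u \<subseteq> V"
  by (auto simp: mem_closed_nbhd_iff)

lemma mem_closed_nbhd_commute:
  assumes "simple_graph V E" "u \<in> V" "x \<in> V"
  shows "x \<in> closed_nbhd V E u \<longleftrightarrow> u \<in> closed_nbhd V E x"
  using assms by (auto simp: mem_closed_nbhd_iff simple_graph_def)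

lemma card_closed_nbhd:
  assumes "simple_graph V E"
  shows "card (closed_nbhd V E u) = degree V E u + 1"
proof -
  have "u \<notin> nbhd V E u" "finite (nbhd V E u)"
    using assms by (auto simp: nbhd_def simple_graph_def)
  then show ?thesis by (simp add: closed_nbhd_def degree_def)
qed

lemma degree_le_max_degree:
  "finite V \<Longrightarrow> u \<in> V \<Longrightarrow> degree V E u \<le> max_degree V E"
  unfolding max_degree_def by (intro Max_ge) auto

lemma sum_card_closed_nbhd_inter_commute:
  assumes G: "simple_graph V E" and "A \<subseteq> V" "B \<subseteq> V"
  shows "(\<Sum>a\<in>A. card (closed_nbhd V E a \<inter> B)) = (\<Sum>b\<in>B. card (closed_nbhd V E b \<inter> A))"
proof -
  have fin: "finite A" "finite B"
    using assms finite_subset by (auto simp: simple_graph_def)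
  have "(\<Sum>a\<in>A. card (closed_nbhd V E a \<inter> B))
      = (\<Sum>a\<in>A. \<Sum>b\<in>B. of_bool (b \<in> closed_nbhd V E a))"
    using fin by (simp add: Int_def conj_commute)
  also have "\<dots> = (\<Sum>b\<in>B. \<Sum>a\<in>A. of_bool (b \<in> closed_nbhd V E a))"
    by (rule sum.swap)
  also have "\<dots> = (\<Sum>b\<in>B. \<Sum>a\<in>A. of_bool (a \<in> closed_nbhd V E b))"
    using mem_closed_nbhd_commute[OF G] assms(2,3) by (intro sum.cong) auto
  also have "\<dots> = (\<Sum>b\<in>B. card (closed_nbhd V E b \<inter> A))"
    using fin by (simp add: Int_def conj_commute)
  finally show ?thesis .
qed

lemma card_eq_sum_degree_efficient_dominating:
  assumes G: "simple_graph V E" and D: "efficient_dominating V E D"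
  shows "card V = (\<Sum>u\<in>D. degree V E u + 1)"
proof -
  have DV: "D \<subseteq> V" using D by (simp add: efficient_dominating_def)
  have "card V = (\<Sum>x\<in>V. card (closed_nbhd V E x \<inter> D))"
    using D by (simp add: efficient_dominating_def)
  also have "\<dots> = (\<Sum>u\<in>D. card (closed_nbhd V E u \<inter> V))"
    by (rule sum_card_closed_nbhd_inter_commute[OF G subset_refl DV])
  also have "\<dots> = (\<Sum>u\<in>D. degree V E u + 1)"
    using DV closed_nbhd_subset[of _ V E]
    by (intro sum.cong) (auto simp: Int_absorb2 card_closed_nbhd[OF G])
  finally show ?thesis .
qed

lemma max_degree_pos:
  assumes "simple_graph V E" "w \<in> V" "y \<in> V" "E w y"
  shows "0 < max_degree V E"
proof -
  have "y \<in> nbhd V E w" "finite (nbhd V E w)"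
    using assms by (auto simp: nbhd_def simple_graph_def)
  then have "0 < degree V E w" by (auto simp: degree_def card_gt_0_iff)
  moreover have "degree V E w \<le> max_degree V E"
    using assms(1,2) by (simp add: degree_le_max_degree simple_graph_def)
  ultimately show ?thesis by linarith
qed

lemma connected_graph_has_neighbour:
  assumes "connected_graph V E" "w \<in> V" "u \<in> V" "u \<noteq> w"
  shows "\<exists>y\<in>V. E w y"
proof -
  have "(w, u) \<in> {(x, y). x \<in> V \<and> y \<in> V \<and> E x y}\<^sup>*"
    using assms by (auto simp: connected_graph_def)
  then show ?thesis
    by (rule converse_rtranclE) (use assms(4) in auto)
qed

lemma dominating_tight_card:
  assumes G: "simple_graph V E" and W: "W \<subseteq> V" and D: "dominating W E D"
    and inside: "\<forall>u\<in>D. closed_nbhd V E u \<subseteq> W"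
    and small: "card D * (max_degree V E + 1) \<le> card W"
  shows "\<forall>x\<in>W. card (closed_nbhd V E x \<inter> D) = 1"
    and "\<forall>u\<in>D. degree V E u = max_degree V E"
proof -
  have finV: "finite V" using G by (simp add: simple_graph_def)
  have DW: "D \<subseteq> W" using D by (simp add: dominating_def)
  have finW: "finite W" using W finV by (rule finite_subset)
  have finD: "finite D" using DW finW by (rule finite_subset)
  have hit: "1 \<le> card (closed_nbhd V E x \<inter> D)" if x: "x \<in> W" for x
  proof -
    have "\<exists>u\<in>D. u \<in> closed_nbhd V E x"
      using D DW W x by (cases "x \<in> D") (auto simp: dominating_def mem_closed_nbhd_iff, blast)
    then show ?thesis
      using finD by (simp add: Suc_le_eq card_gt_0_iff) blast
  qed
  have bounded: "degree V E u + 1 \<le> max_degree V E + 1" if "u \<in> D" for u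
    using that DW W degree_le_max_degree[OF finV] by auto
  have count: "(\<Sum>x\<in>W. card (closed_nbhd V E x \<inter> D)) = (\<Sum>u\<in>D. degree V E u + 1)"
  proof -
    have "(\<Sum>x\<in>W. card (closed_nbhd V E x \<inter> D)) = (\<Sum>u\<in>D. card (closed_nbhd V E u \<inter> W))"
      by (rule sum_card_closed_nbhd_inter_commute[OF G W subset_trans[OF DW W]])
    also have "\<dots> = (\<Sum>u\<in>D. degree V E u + 1)"
      using inside by (intro sum.cong) (auto simp: Int_absorb2 card_closed_nbhd[OF G])
    finally show ?thesis .
  qed
  have lower: "(\<Sum>x\<in>W. 1) \<le> (\<Sum>x\<in>W. card (closed_nbhd V E x \<inter> D))"
    using hit by (rule sum_mono)
  have upper: "(\<Sum>u\<in>D. degree V E u + 1) \<le> (\<Sum>u\<in>D. max_degree V E + 1)"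
    using bounded by (rule sum_mono)
  have total: "(\<Sum>u\<in>D. max_degree V E + 1) \<le> (\<Sum>x\<in>W. 1)"
    using small by (simp add: mult.commute)
  show "\<forall>x\<in>W. card (closed_nbhd V E x \<inter> D) = 1"
  proof
    fix x assume x: "x \<in> W"
    have "(\<Sum>x\<in>W. 1) = (\<Sum>x\<in>W. card (closed_nbhd V E x \<inter> D))"
      using lower upper count total by linarith
    from sum_mono_inv[OF this hit x finW] show "card (closed_nbhd V E x \<inter> D) = 1" ..
  qed
  show "\<forall>u\<in>D. degree V E u = max_degree V E"
  proof
    fix u assume u: "u \<in> D"
    have "(\<Sum>u\<in>D. degree V E u + 1) = (\<Sum>u\<in>D. max_degree V E + 1)"
      using lower upper count total by linarith
    from sum_mono_inv[OF this bounded u finD] show "degree V E u = max_degree V E" by simp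
  qed
qed

lemma gamma_set_exists: "finite V \<Longrightarrow> \<exists>D. gamma_set V E D"
proof -
  assume "finite V"
  then have "\<exists>k D. dominating V E D \<and> card D = k" by (auto simp: dominating_def)
  then show ?thesis
    unfolding gamma_set_def domination_number_def by (rule LeastI2_ex) blast
qed

lemma domination_number_le: "dominating V E D \<Longrightarrow> domination_number V E \<le> card D"
  unfolding domination_number_def by (rule Least_le) blast

lemma dominating_insert_removed:
  "dominating (V - {v}) E D \<Longrightarrow> v \<in> V \<Longrightarrow> dominating V E (insert v D)"
  by (auto simp: dominating_def)

lemma gamma_set_insert_critical:
  assumes "finite V" "v \<in> V" "gamma_critical_vertex V E v" "gamma_set (V - {v}) E D"
  shows "gamma_set V E (insert v D)"
proof -
  have dom: "dominating V E (insert v D)"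
    using assms(2,4) by (simp add: gamma_set_def dominating_insert_removed)
  have "finite D" "v \<notin> D"
    using assms(1,4) finite_subset by (auto simp: gamma_set_def dominating_def)
  then have "card (insert v D) < domination_number V E + 1"
    using assms(3,4) by (simp add: gamma_set_def gamma_critical_vertex_def)
  then show ?thesis
    using domination_number_le[OF dom] dom by (simp add: gamma_set_def)
qed

lemma card_gamma_set_critical:
  assumes "finite V" "v \<in> V" "gamma_critical_vertex V E v" "gamma_set (V - {v}) E D"
  shows "card D = domination_number V E - 1"
proof -
  have "finite D" "v \<notin> D"
    using assms(1,4) finite_subset by (auto simp: gamma_set_def dominating_def)
  then show ?thesis
    using gamma_set_insert_critical[OF assms] by (auto simp: gamma_set_def)
qed

text \<open>A vertex adjacent to \<open>D\<close> would make \<open>D\<close> dominate all of \<open>V\<close>, against criticality.\<close>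

lemma closed_nbhd_disjoint_gamma_set_critical:
  assumes "simple_graph V E" "v \<in> V" "gamma_critical_vertex V E v" "gamma_set (V - {v}) E D"
  shows "closed_nbhd V E v \<inter> D = {}"
proof (rule ccontr)
  assume "closed_nbhd V E v \<inter> D \<noteq> {}"
  moreover have "v \<notin> D" using assms(4) by (auto simp: gamma_set_def dominating_def)
  ultimately obtain u where "u \<in> D" "E v u" by (auto simp: mem_closed_nbhd_iff)
  then have "dominating V E D"
    using assms(2,4) by (auto simp: gamma_set_def dominating_def)
  then show False
    using domination_number_le assms(3,4) by (fastforce simp: gamma_set_def gamma_critical_vertex_def)
qed

locale extremal_critical_graph =
  fixes V :: "'a set" and E :: "'a \<Rightarrow> 'a \<Rightarrow> bool"
  assumes graph: "simple_graph V E"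
    and critical: "vertex_domination_critical V E"
    and order: "card V = (max_degree V E + 1) * (domination_number V E - 1) + 1"
    and nontrivial: "2 \<le> card V"
begin

lemma finite_vertices: "finite V"
  using graph by (simp add: simple_graph_def)

lemma critical_vertex: "v \<in> V \<Longrightarrow> gamma_critical_vertex V E v"
  using critical by (simp add: vertex_domination_critical_def)

lemma domination_number_ge_2: "2 \<le> domination_number V E"
proof (rule ccontr)
  assume "\<not> ?thesis"
  then have "domination_number V E - 1 = 0" by simp
  then show False using order nontrivial by simp
qed

text \<open>By the order equation, the \<open>\<gamma> - 1\<close> closed neighbourhoods of a \<open>\<gamma>\<close>-set of \<open>G - v\<close>,
  of size at most \<open>\<Delta> + 1\<close> each, can only just cover the \<open>n - 1\<close> vertices of \<open>G - v\<close>.\<close>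

lemma gamma_set_removed_tight:
  assumes v: "v \<in> V" and D: "gamma_set (V - {v}) E D"
  shows "\<forall>x\<in>V - {v}. card (closed_nbhd V E x \<inter> D) = 1"
    and "\<forall>u\<in>D. degree V E u = max_degree V E"
proof -
  have DW: "D \<subseteq> V - {v}" using D by (simp add: gamma_set_def dominating_def)
  have disjoint: "closed_nbhd V E v \<inter> D = {}"
    by (rule closed_nbhd_disjoint_gamma_set_critical[OF graph v critical_vertex[OF v] D])
  have "closed_nbhd V E u \<subseteq> V - {v}" if u: "u \<in> D" for u
  proof -
    have "u \<in> V" "u \<notin> closed_nbhd V E v" using u DW disjoint by auto
    then show ?thesis
      using closed_nbhd_subset[of u V E] mem_closed_nbhd_commute[OF graph _ v] by auto
  qed
  moreover have "card D * (max_degree V E + 1) \<le> card (V - {v})"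
    using card_gamma_set_critical[OF finite_vertices v critical_vertex[OF v] D] order v
    by (simp add: finite_vertices mult.commute)
  moreover have "dominating (V - {v}) E D" using D by (simp add: gamma_set_def)
  ultimately show "\<forall>x\<in>V - {v}. card (closed_nbhd V E x \<inter> D) = 1"
    and "\<forall>u\<in>D. degree V E u = max_degree V E"
    using dominating_tight_card[OF graph, of "V - {v}" D] by auto
qed

lemma card_closed_nbhd_inter_gamma_set_removed:
  assumes "v \<in> V" "gamma_set (V - {v}) E D" "x \<in> V"
  shows "card (closed_nbhd V E x \<inter> D) = of_bool (x \<noteq> v)"
  using gamma_set_removed_tight(1)[OF assms(1,2)] assms
    closed_nbhd_disjoint_gamma_set_critical[OF graph assms(1) critical_vertex assms(2)]
  by auto

text \<open>Counting the pairs \<open>(a, b) \<in> D\<^sub>v \<times> D\<^sub>w\<close> with \<open>b \<in> N[a]\<close> from both sides gives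
  \<open>|D\<^sub>v - {w}| = |D\<^sub>w - {v}|\<close>.\<close>

lemma gamma_set_removed_swap:
  assumes v: "v \<in> V" and w: "w \<in> V"
    and Dv: "gamma_set (V - {v}) E Dv" and Dw: "gamma_set (V - {w}) E Dw"
  shows "w \<in> Dv \<longleftrightarrow> v \<in> Dw"
proof -
  have sub: "Dv \<subseteq> V" "Dw \<subseteq> V"
    using Dv Dw by (auto simp: gamma_set_def dominating_def)
  then have fin: "finite Dv" "finite Dw"
    using finite_vertices finite_subset by auto
  have "card (Dv - {w}) = (\<Sum>a\<in>Dv. of_bool (a \<noteq> w))"
    using fin by (simp add: set_diff_eq Int_def)
  also have "\<dots> = (\<Sum>a\<in>Dv. card (closed_nbhd V E a \<inter> Dw))"
    using sub by (intro sum.cong) (auto simp: card_closed_nbhd_inter_gamma_set_removed[OF w Dw])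
  also have "\<dots> = (\<Sum>b\<in>Dw. card (closed_nbhd V E b \<inter> Dv))"
    by (rule sum_card_closed_nbhd_inter_commute[OF graph sub])
  also have "\<dots> = (\<Sum>b\<in>Dw. of_bool (b \<noteq> v))"
    using sub by (intro sum.cong) (auto simp: card_closed_nbhd_inter_gamma_set_removed[OF v Dv])
  also have "\<dots> = card (Dw - {v})"
    using fin by (simp add: set_diff_eq Int_def)
  finally have "card (Dv - {w}) = card (Dw - {v})" .
  moreover have "card Dv = card Dw"
    using card_gamma_set_critical[OF finite_vertices v critical_vertex[OF v] Dv]
      card_gamma_set_critical[OF finite_vertices w critical_vertex[OF w] Dw] by simp
  ultimately show ?thesis
    using card_Diff1_less[OF fin(1), of w] card_Diff1_less[OF fin(2), of v]
    by (cases "w \<in> Dv"; cases "v \<in> Dw") simp_all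
qed

lemma gamma_set_removed_exists: "v \<in> V \<Longrightarrow> \<exists>D. gamma_set (V - {v}) E D"
  using finite_vertices by (simp add: gamma_set_exists)

lemma degree_eq_max_degree:
  assumes w: "w \<in> V"
  shows "degree V E w = max_degree V E"
proof -
  obtain Dw where Dw: "gamma_set (V - {w}) E Dw"
    using gamma_set_removed_exists[OF w] by blast
  have "card Dw \<noteq> 0"
    using card_gamma_set_critical[OF finite_vertices w critical_vertex[OF w] Dw]
      domination_number_ge_2 by simp
  then obtain v where v: "v \<in> Dw" by fastforce
  then have vV: "v \<in> V" using Dw by (auto simp: gamma_set_def dominating_def)
  obtain Dv where Dv: "gamma_set (V - {v}) E Dv"
    using gamma_set_removed_exists[OF vV] by blast
  have "w \<in> Dv" using gamma_set_removed_swap[OF vV w Dv Dw] v by blast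
  then show ?thesis using gamma_set_removed_tight(2)[OF vV Dv] by blast
qed

lemma regular: "regular V E"
  by (simp add: regular_def degree_eq_max_degree)

lemma has_EDS_removed: "v \<in> V \<Longrightarrow> has_EDS (V - {v}) E"
proof -
  assume v: "v \<in> V"
  then obtain D where D: "gamma_set (V - {v}) E D"
    using gamma_set_removed_exists by blast
  then have "D \<subseteq> V - {v}" by (simp add: gamma_set_def dominating_def)
  then have "closed_nbhd (V - {v}) E x \<inter> D = closed_nbhd V E x \<inter> D" for x
    by (auto simp: closed_nbhd_def nbhd_def)
  then have "efficient_dominating (V - {v}) E D"
    using gamma_set_removed_tight(1)[OF v D] \<open>D \<subseteq> V - {v}\<close>
    by (simp add: efficient_dominating_def)
  then show ?thesis by (auto simp: has_EDS_def)
qed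

lemma not_has_EDS:
  assumes "0 < max_degree V E"
  shows "\<not> has_EDS V E"
proof
  assume "has_EDS V E"
  then obtain D where D: "efficient_dominating V E D" by (auto simp: has_EDS_def)
  then have "D \<subseteq> V" by (simp add: efficient_dominating_def)
  then have "card V = card D * (max_degree V E + 1)"
    using card_eq_sum_degree_efficient_dominating[OF graph D] degree_eq_max_degree
    by (simp add: subset_iff)
  then have "max_degree V E + 1 dvd card V" by (simp only: dvd_triv_right)
  then have "max_degree V E + 1 dvd 1"
    unfolding order by (simp only: dvd_add_right_iff dvd_triv_left)
  then show False using assms by simp
qed

lemma gamma_set_removed_unique: "v \<in> V \<Longrightarrow> \<exists>!D. gamma_set (V - {v}) E D"
proof (rule ex_ex1I)
  show "v \<in> V \<Longrightarrow> \<exists>D. gamma_set (V - {v}) E D" by (rule gamma_set_removed_exists)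
next
  fix D D'
  assume v: "v \<in> V" and D: "gamma_set (V - {v}) E D" and D': "gamma_set (V - {v}) E D'"
  have "x \<in> D \<longleftrightarrow> x \<in> D'" if x: "x \<in> V" for x
  proof -
    obtain Dx where Dx: "gamma_set (V - {x}) E Dx"
      using gamma_set_removed_exists[OF x] by blast
    show ?thesis
      using gamma_set_removed_swap[OF v x D Dx] gamma_set_removed_swap[OF v x D' Dx] by blast
  qed
  moreover have "D \<subseteq> V" "D' \<subseteq> V"
    using D D' by (auto simp: gamma_set_def dominating_def)
  ultimately show "D = D'" by blast
qed

lemma two_gamma_sets:
  assumes "w \<in> V" "y \<in> V" "E w y"
  shows "\<exists>D1 D2. gamma_set V E D1 \<and> gamma_set V E D2 \<and> D1 \<noteq> D2"
proof -
  obtain Dw Dy where Dw: "gamma_set (V - {w}) E Dw" and Dy: "gamma_set (V - {y}) E Dy"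
    using gamma_set_removed_exists assms(1,2) by blast
  have "w \<in> closed_nbhd V E y"
    using assms graph by (auto simp: mem_closed_nbhd_iff simple_graph_def)
  then have "w \<notin> Dy"
    using closed_nbhd_disjoint_gamma_set_critical[OF graph assms(2) critical_vertex[OF assms(2)] Dy]
    by blast
  moreover have "w \<noteq> y" using assms(3) graph by (auto simp: simple_graph_def)
  ultimately have "insert w Dw \<noteq> insert y Dy" by blast
  then show ?thesis
    using gamma_set_insert_critical[OF finite_vertices assms(1) critical_vertex[OF assms(1)] Dw]
      gamma_set_insert_critical[OF finite_vertices assms(2) critical_vertex[OF assms(2)] Dy]
    by blast
qed

end

theorem theorem3p18:
  fixes V :: "'a set" and E :: "'a \<Rightarrow> 'a \<Rightarrow> bool"
  assumes "simple_graph V E"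
    and "connected_graph V E"
    and "card V = (max_degree V E + 1) * (domination_number V E - 1) + 1"
    and "card V \<ge> 4"
    and "vertex_domination_critical V E"
  shows "regular V E \<and> hypo_efficient_domination V E \<and> hypo_unique_domination V E"
proof -
  interpret extremal_critical_graph V E
    using assms by unfold_locales simp_all
  obtain w u where wu: "w \<in> V" "u \<in> V" "u \<noteq> w"
    using nontrivial by (auto simp: card_le_Suc_iff numeral_2_eq_2)
  then obtain y where y: "y \<in> V" "E w y"
    using connected_graph_has_neighbour[OF assms(2)] by blast
  show ?thesis
    using regular not_has_EDS[OF max_degree_pos[OF graph wu(1) y]] has_EDS_removed
      two_gamma_sets[OF wu(1) y] gamma_set_removed_unique
    by (simp add: hypo_efficient_domination_def hypo_unique_domination_def)
qed

end
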